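(* Suppose $x_1,\dots,x_{15}\in\mathbb{H}^3$ satisfy $\langle\Gamma_i,\Gamma_j\rangle=-\frac1{21}$ for all $i\ne j$, where $\Gamma_i := x_ix_i^\dagger-\frac13|x_i|^2I_3$, and suppose additionally that $|x_i|^4\in[1-10^{-6},1+10^{-6}]$ for each $i$. Then $|x_i|=1$ for all $i$ and $\{x_1,\dots,x_{15}\}$ is a tight simplex in $\mathbb{H}\mathbb{P}^2$.
   Context: $\mathbb{H}$ denotes the quaternions; $\dagger$ is conjugate transpose and $\langle x,y\rangle=x^\dagger y$ on $\mathbb{H}^3$. On $3\times 3$ quaternionic Hermitian matrices the inner product is $\langle A,B\rangle=\operatorname{Re}\operatorname{Tr}(AB)$. $\mathbb{H}\mathbb{P}^{2}$ is the space of quaternionic lines in $\mathbb{H}^3$ (scalars acting on the right). A tight simplex of $N$ points in $\mathbb{H}\mathbb{P}^{2}$ is a set of $N$ distinct points represented by unit vectors $x_1,\dots,x_N$ with $|\langle x_i,x_j\rangle|^2=\frac{N-3}{3(N-1)}$ for all $i\ne j$ (for $N=15$ this value is $2/7$). *)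

theory Defs
  imports "HOL-Analysis.Analysis"
begin

datatype quat = Quat (qRe: real) (qIm1: real) (qIm2: real) (qIm3: real)

instantiation quat :: ab_group_add
begin
definition "0 = Quat 0 0 0 0"
definition "p + q = Quat (qRe p + qRe q) (qIm1 p + qIm1 q) (qIm2 p + qIm2 q) (qIm3 p + qIm3 q)"
definition "- q = Quat (- qRe q) (- qIm1 q) (- qIm2 q) (- qIm3 q)"
definition "p - q = Quat (qRe p - qRe q) (qIm1 p - qIm1 q) (qIm2 p - qIm2 q) (qIm3 p - qIm3 q)"
instance
  by standard (auto simp: zero_quat_def plus_quat_def uminus_quat_def minus_quat_def intro: quat.expand)
end

instantiation quat :: times
begin
definition "p * q = Quat
  (qRe p * qRe q - qIm1 p * qIm1 q - qIm2 p * qIm2 q - qIm3 p * qIm3 q)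
  (qRe p * qIm1 q + qIm1 p * qRe q + qIm2 p * qIm3 q - qIm3 p * qIm2 q)
  (qRe p * qIm2 q - qIm1 p * qIm3 q + qIm2 p * qRe q + qIm3 p * qIm1 q)
  (qRe p * qIm3 q + qIm1 p * qIm2 q - qIm2 p * qIm1 q + qIm3 p * qRe q)"
instance ..
end

definition qcnj :: "quat \<Rightarrow> quat" where
  "qcnj q = Quat (qRe q) (- qIm1 q) (- qIm2 q) (- qIm3 q)"

definition qreal :: "real \<Rightarrow> quat" where
  "qreal r = Quat r 0 0 0"

definition qnorm2 :: "quat \<Rightarrow> real" where
  "qnorm2 q = (qRe q)\<^sup>2 + (qIm1 q)\<^sup>2 + (qIm2 q)\<^sup>2 + (qIm3 q)\<^sup>2"

definition hinner :: "quat^3 \<Rightarrow> quat^3 \<Rightarrow> quat" where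
  "hinner x y = (\<Sum>k\<in>UNIV. qcnj (x$k) * y$k)"

definition vnorm2 :: "quat^3 \<Rightarrow> real" where
  "vnorm2 x = (\<Sum>k\<in>UNIV. qnorm2 (x$k))"

definition vnorm :: "quat^3 \<Rightarrow> real" where
  "vnorm x = sqrt (vnorm2 x)"

definition Gamma_mat :: "quat^3 \<Rightarrow> 3 \<Rightarrow> 3 \<Rightarrow> quat" where
  "Gamma_mat x a b = x$a * qcnj (x$b) - (if a = b then qreal (vnorm2 x / 3) else 0)"

definition hmat_inner :: "(3 \<Rightarrow> 3 \<Rightarrow> quat) \<Rightarrow> (3 \<Rightarrow> 3 \<Rightarrow> quat) \<Rightarrow> real" where
  "hmat_inner A B = qRe (\<Sum>a\<in>UNIV. \<Sum>b\<in>UNIV. A a b * B b a)"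

text \<open>The quaternionic line spanned by \<open>x\<close> (scalars act on the right); it is the point
  of \<open>\<bbbH>\<bbbP>\<^sup>2\<close> represented by a nonzero vector \<open>x\<close>.\<close>
definition hline :: "quat^3 \<Rightarrow> (quat^3) set" where
  "hline x = {y. \<exists>q. y = (\<chi> k. x$k * q)}"

definition tight_simplex_HP2 :: "nat \<Rightarrow> (nat \<Rightarrow> quat^3) \<Rightarrow> bool" where
  "tight_simplex_HP2 N x \<longleftrightarrow>
     (\<forall>i<N. vnorm (x i) = 1) \<and>
     (\<forall>i<N. \<forall>j<N. i \<noteq> j \<longrightarrow> hline (x i) \<noteq> hline (x j)) \<and>
     (\<forall>i<N. \<forall>j<N. i \<noteq> j \<longrightarrow>
        qnorm2 (hinner (x i) (x j)) = (real N - 3) / (3 * (real N - 1)))"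

end

theory Submission
  imports Defs
begin

text \<open>Regard the \<open>\<Gamma>\<^sub>i\<close> as vectors in the 15-dimensional real space of Hermitian \<open>3\<times>3\<close>
  quaternionic matrices. Together with \<open>I\<^sub>3\<close> they are 16 vectors, so they satisfy a nontrivial
  linear relation; as their Gram matrix is diagonal minus the constant \<open>1/21\<close> and
  \<open>\<langle>\<Gamma>\<^sub>i, I\<^sub>3\<rangle> = 0\<close>, this forces \<open>\<Sum>\<^sub>i 1/(14|x\<^sub>i|\<^sup>4 + 1) = 1\<close>.
  On the other hand the degree-2 zonal kernel of \<open>\<bbbH>\<bbbP>\<^sup>2\<close>, homogenised in \<open>|x|\<close> and \<open>|y|\<close>,
  is positive semidefinite, being the Gram kernel of a map \<open>E \<mapsto> S\<^sub>x(E)\<close> on Hermitian matrices.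
  Tested against the weights \<open>c\<^sub>i = 21/(14|x\<^sub>i|\<^sup>4 + 1)\<close> it yields \<open>\<Sum>\<^sub>i c\<^sub>i|x\<^sub>i|\<^sup>2 \<ge> 21\<close>,
  while the first identity gives \<open>\<Sum>\<^sub>i c\<^sub>i|x\<^sub>i|\<^sup>2 - 21 = -\<Sum>\<^sub>i (21/2)(|x\<^sub>i|\<^sup>2 - 1)\<^sup>2/(14|x\<^sub>i|\<^sup>4 + 1)\<close>.\<close>

instantiation quat :: ring_1
begin
definition "1 = Quat 1 0 0 0"
instance
  by standard (auto simp: one_quat_def times_quat_def plus_quat_def zero_quat_def
       minus_quat_def uminus_quat_def algebra_simps intro: quat.expand)
end

lemma quat_eq_iff:
  "p = q \<longleftrightarrow> qRe p = qRe q \<and> qIm1 p = qIm1 q \<and> qIm2 p = qIm2 q \<and> qIm3 p = qIm3 q"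
  by (cases p; cases q) auto

lemma quat_components [simp]:
  "qRe (p + q) = qRe p + qRe q" "qIm1 (p + q) = qIm1 p + qIm1 q"
  "qIm2 (p + q) = qIm2 p + qIm2 q" "qIm3 (p + q) = qIm3 p + qIm3 q"
  "qRe (p - q) = qRe p - qRe q" "qIm1 (p - q) = qIm1 p - qIm1 q"
  "qIm2 (p - q) = qIm2 p - qIm2 q" "qIm3 (p - q) = qIm3 p - qIm3 q"
  "qRe (- q) = - qRe q" "qIm1 (- q) = - qIm1 q" "qIm2 (- q) = - qIm2 q" "qIm3 (- q) = - qIm3 q"
  "qRe 0 = 0" "qIm1 0 = 0" "qIm2 0 = 0" "qIm3 0 = 0"
  "qRe 1 = 1" "qIm1 1 = 0" "qIm2 1 = 0" "qIm3 1 = 0"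
  by (simp_all add: plus_quat_def minus_quat_def uminus_quat_def zero_quat_def one_quat_def)

lemma quat_mult_components [simp]:
  "qRe (p * q) = qRe p * qRe q - qIm1 p * qIm1 q - qIm2 p * qIm2 q - qIm3 p * qIm3 q"
  "qIm1 (p * q) = qRe p * qIm1 q + qIm1 p * qRe q + qIm2 p * qIm3 q - qIm3 p * qIm2 q"
  "qIm2 (p * q) = qRe p * qIm2 q - qIm1 p * qIm3 q + qIm2 p * qRe q + qIm3 p * qIm1 q"
  "qIm3 (p * q) = qRe p * qIm3 q + qIm1 p * qIm2 q - qIm2 p * qIm1 q + qIm3 p * qRe q"
  by (simp_all add: times_quat_def)

lemma qcnj_components [simp]:
  "qRe (qcnj q) = qRe q" "qIm1 (qcnj q) = - qIm1 q" "qIm2 (qcnj q) = - qIm2 q" "qIm3 (qcnj q) = - qIm3 q"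
  by (simp_all add: qcnj_def)

lemma qreal_components [simp]:
  "qRe (qreal r) = r" "qIm1 (qreal r) = 0" "qIm2 (qreal r) = 0" "qIm3 (qreal r) = 0"
  by (simp_all add: qreal_def)

lemma qRe_sum: "qRe (sum f A) = (\<Sum>a\<in>A. qRe (f a))"
  by (induction A rule: infinite_finite_induct) auto

lemma qRe_mult_commute: "qRe (p * q) = qRe (q * p)"
  by simp

lemma qcnj_mult: "qcnj (p * q) = qcnj q * qcnj p"
  by (simp add: quat_eq_iff algebra_simps)

lemma qcnj_qcnj [simp]: "qcnj (qcnj p) = p"
  by (simp add: quat_eq_iff)

lemma qcnj_add [simp]: "qcnj (p + q) = qcnj p + qcnj q"
  by (simp add: quat_eq_iff)

lemma qcnj_sum: "qcnj (sum f A) = (\<Sum>a\<in>A. qcnj (f a))"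
  by (induction A rule: infinite_finite_induct) (auto simp: quat_eq_iff)

lemma qcnj_qreal [simp]: "qcnj (qreal r) = qreal r"
  by (simp add: quat_eq_iff)

lemma qreal_mult_commute: "qreal r * p = p * qreal r"
  by (simp add: quat_eq_iff)

lemma qreal_mult_qreal: "qreal r * qreal s = qreal (r * s)"
  by (simp add: quat_eq_iff)

lemma qreal_sum: "qreal (sum f A) = (\<Sum>a\<in>A. qreal (f a))"
  by (induction A rule: infinite_finite_induct) (auto simp: quat_eq_iff)

lemma qRe_qreal_mult: "qRe (qreal r * p) = r * qRe p"
  by simp

lemma mult_qcnj_self: "p * qcnj p = qreal (qnorm2 p)" "qcnj p * p = qreal (qnorm2 p)"
  by (simp_all add: quat_eq_iff qnorm2_def power2_eq_square algebra_simps)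

lemma qnorm2_nonneg: "qnorm2 p \<ge> 0"
  by (simp add: qnorm2_def)

lemma qnorm2_mult: "qnorm2 (p * q) = qnorm2 p * qnorm2 q"
  by (simp add: qnorm2_def power2_eq_square algebra_simps)

lemma qRe_cnj_mult_cyclic: "qRe ((qcnj c * a) * (qcnj b * d)) = qRe ((a * qcnj b) * (d * qcnj c))"
proof -
  have "(qcnj c * a) * (qcnj b * d) = qcnj c * ((a * qcnj b) * d)"
    by (simp add: mult.assoc)
  then have "qRe ((qcnj c * a) * (qcnj b * d)) = qRe (((a * qcnj b) * d) * qcnj c)"
    by (metis qRe_mult_commute)
  then show ?thesis
    by (simp only: mult.assoc)
qed

lemma vnorm2_nonneg: "vnorm2 x \<ge> 0"
  by (simp add: vnorm2_def sum_nonneg qnorm2_nonneg)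

lemma hinner_self: "hinner x x = qreal (vnorm2 x)"
  by (simp add: hinner_def vnorm2_def mult_qcnj_self qreal_sum)

section \<open>Quaternionic \<open>3\<times>3\<close> matrices and the trace form\<close>

type_synonym qmat = "3 \<Rightarrow> 3 \<Rightarrow> quat"

definition qm_add :: "qmat \<Rightarrow> qmat \<Rightarrow> qmat" where
  "qm_add A B = (\<lambda>a b. A a b + B a b)"

definition qm_smult :: "real \<Rightarrow> qmat \<Rightarrow> qmat" where
  "qm_smult r A = (\<lambda>a b. qreal r * A a b)"

definition qm_mult :: "qmat \<Rightarrow> qmat \<Rightarrow> qmat" where
  "qm_mult A B = (\<lambda>a b. \<Sum>k\<in>UNIV. A a k * B k b)"

definition qm_one :: qmat where
  "qm_one = (\<lambda>a b. if a = b then 1 else 0)"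

definition qm_sum :: "('i \<Rightarrow> qmat) \<Rightarrow> 'i set \<Rightarrow> qmat" where
  "qm_sum f I = (\<lambda>a b. \<Sum>i\<in>I. f i a b)"

definition outer :: "quat^3 \<Rightarrow> qmat" where
  "outer x = (\<lambda>a b. x$a * qcnj (x$b))"

definition hermitian :: "qmat \<Rightarrow> bool" where
  "hermitian A \<longleftrightarrow> (\<forall>a b. A b a = qcnj (A a b))"

definition jordan :: "qmat \<Rightarrow> qmat \<Rightarrow> qmat" where
  "jordan M X = qm_smult (1/2) (qm_add (qm_mult M X) (qm_mult X M))"

lemma Gamma_mat_eq: "Gamma_mat x = qm_add (outer x) (qm_smult (- (vnorm2 x / 3)) qm_one)"
  by (rule ext)+ (simp add: Gamma_mat_def qm_add_def qm_smult_def outer_def qm_one_def quat_eq_iff)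

lemma hmat_inner_commute: "hmat_inner A B = hmat_inner B A"
  unfolding hmat_inner_def qRe_sum
  by (subst sum.swap) (simp add: mult.commute)

lemma hmat_inner_add_left [simp]: "hmat_inner (qm_add A B) C = hmat_inner A C + hmat_inner B C"
  by (simp add: hmat_inner_def qm_add_def qRe_sum distrib_right sum.distrib)

lemma hmat_inner_add_right [simp]: "hmat_inner C (qm_add A B) = hmat_inner C A + hmat_inner C B"
  by (simp add: hmat_inner_commute[of C])

lemma hmat_inner_smult_left [simp]: "hmat_inner (qm_smult r A) C = r * hmat_inner A C"
proof -
  have "qRe (qreal r * A a b * C b a) = r * qRe (A a b * C b a)" for a b
    by (simp add: mult.assoc del: quat_mult_components) (simp add: qRe_qreal_mult)
  then show ?thesis
    by (simp add: hmat_inner_def qm_smult_def qRe_sum sum_distrib_left del: quat_mult_components)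
qed

lemma hmat_inner_smult_right [simp]: "hmat_inner C (qm_smult r A) = r * hmat_inner C A"
  by (simp add: hmat_inner_commute[of C])

lemma hmat_inner_sum_left:
  "finite I \<Longrightarrow> hmat_inner (qm_sum f I) C = (\<Sum>i\<in>I. hmat_inner (f i) C)"
  unfolding hmat_inner_def qm_sum_def qRe_sum sum_distrib_right
  by (subst sum.swap, subst (2) sum.swap) simp

lemma hmat_inner_sum_right:
  "finite I \<Longrightarrow> hmat_inner C (qm_sum f I) = (\<Sum>i\<in>I. hmat_inner C (f i))"
  by (simp add: hmat_inner_commute[of C] hmat_inner_sum_left)

lemma hmat_inner_mult_left: "hmat_inner (qm_mult A B) C = hmat_inner A (qm_mult B C)"
proof -
  have "(\<Sum>a\<in>UNIV. \<Sum>b\<in>UNIV. (\<Sum>k\<in>UNIV. A a k * B k b) * C b a)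
      = (\<Sum>a\<in>UNIV. \<Sum>b\<in>UNIV. \<Sum>k\<in>UNIV. A a k * B k b * C b a)"
    by (simp only: sum_distrib_right)
  also have "\<dots> = (\<Sum>a\<in>UNIV. \<Sum>k\<in>UNIV. \<Sum>b\<in>UNIV. A a k * (B k b * C b a))"
    by (rule sum.cong[OF refl], subst sum.swap) (simp only: mult.assoc)
  also have "\<dots> = (\<Sum>a\<in>UNIV. \<Sum>k\<in>UNIV. A a k * (\<Sum>b\<in>UNIV. B k b * C b a))"
    by (simp only: sum_distrib_left)
  finally show ?thesis
    by (simp only: hmat_inner_def qm_mult_def)
qed

lemma hmat_inner_outer: "hmat_inner (outer x) (outer y) = qnorm2 (hinner x y)"
proof -
  let ?h = "hinner x y"
  have cnj: "qcnj ?h = (\<Sum>a\<in>UNIV. qcnj (y$a) * x$a)"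
    by (simp add: hinner_def qcnj_sum qcnj_mult)
  have "qnorm2 ?h = qRe (qcnj ?h * ?h)"
    by (simp only: mult_qcnj_self(2) qreal_components)
  also have "qcnj ?h * ?h = (\<Sum>a\<in>UNIV. \<Sum>b\<in>UNIV. (qcnj (y$a) * x$a) * (qcnj (x$b) * y$b))"
    unfolding cnj by (simp add: hinner_def sum_product)
  also have "qRe \<dots> = (\<Sum>a\<in>UNIV. \<Sum>b\<in>UNIV. qRe ((x$a * qcnj (x$b)) * (y$b * qcnj (y$a))))"
    by (simp only: qRe_sum qRe_cnj_mult_cyclic)
  finally show ?thesis
    by (simp add: hmat_inner_def outer_def qRe_sum del: quat_mult_components)
qed

lemma hmat_inner_outer_self: "hmat_inner (outer x) (outer x) = (vnorm2 x)\<^sup>2"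
  by (simp add: hmat_inner_outer hinner_self qnorm2_def)

lemma if_one_zero_mult:
  "(if P then 1 else 0) * (q::quat) = (if P then q else 0)"
  "q * (if P then 1 else 0) = (if P then q else 0)"
  by auto

lemma hmat_inner_outer_one: "hmat_inner (outer x) qm_one = vnorm2 x"
  by (simp add: hmat_inner_def outer_def qm_one_def if_one_zero_mult qRe_sum vnorm2_def
      mult_qcnj_self del: quat_mult_components)

lemma hmat_inner_one_outer: "hmat_inner qm_one (outer x) = vnorm2 x"
  by (subst hmat_inner_commute) (rule hmat_inner_outer_one)

lemma qRe_of_nat [simp]: "qRe (of_nat n) = of_nat n"
  by (induct n) simp_all

lemma qRe_numeral [simp]: "qRe (numeral n) = numeral n"
  by (metis of_nat_numeral qRe_of_nat)

lemma hmat_inner_one_one: "hmat_inner qm_one qm_one = 3"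
  by (simp add: hmat_inner_def qm_one_def if_one_zero_mult qRe_sum)

lemma hmat_inner_Gamma:
  "hmat_inner (Gamma_mat x) (Gamma_mat y) = qnorm2 (hinner x y) - vnorm2 x * vnorm2 y / 3"
  by (simp add: Gamma_mat_eq hmat_inner_outer hmat_inner_outer_one hmat_inner_one_outer
      hmat_inner_one_one algebra_simps)

lemma hmat_inner_Gamma_self: "hmat_inner (Gamma_mat x) (Gamma_mat x) = 2/3 * (vnorm2 x)\<^sup>2"
  by (simp add: hmat_inner_Gamma hinner_self qnorm2_def power2_eq_square)

lemma hmat_inner_Gamma_one: "hmat_inner (Gamma_mat x) qm_one = 0"
  by (simp add: Gamma_mat_eq hmat_inner_outer_one hmat_inner_one_one)

lemma qm_mult_one_left [simp]: "qm_mult qm_one X = X"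
  by (rule ext)+ (simp add: qm_mult_def qm_one_def if_one_zero_mult)

lemma qm_mult_one_right [simp]: "qm_mult X qm_one = X"
  by (rule ext)+ (simp add: qm_mult_def qm_one_def if_one_zero_mult)

lemma qm_mult_add_left: "qm_mult (qm_add A B) C = qm_add (qm_mult A C) (qm_mult B C)"
  by (rule ext)+ (simp add: qm_mult_def qm_add_def distrib_right sum.distrib)

lemma qm_mult_add_right: "qm_mult C (qm_add A B) = qm_add (qm_mult C A) (qm_mult C B)"
  by (rule ext)+ (simp add: qm_mult_def qm_add_def distrib_left sum.distrib)

lemma qm_mult_smult_left: "qm_mult (qm_smult r A) C = qm_smult r (qm_mult A C)"
  by (rule ext)+
    (simp add: qm_mult_def qm_smult_def sum_distrib_left mult.assoc del: quat_mult_components)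

lemma qm_mult_smult_right: "qm_mult C (qm_smult r A) = qm_smult r (qm_mult C A)"
proof (rule ext)+
  fix a b
  have "C a k * (qreal r * A k b) = qreal r * (C a k * A k b)" for k
    by (metis mult.assoc qreal_mult_commute)
  then show "qm_mult C (qm_smult r A) a b = qm_smult r (qm_mult C A) a b"
    by (simp add: qm_mult_def qm_smult_def sum_distrib_left del: quat_mult_components)
qed

lemma qm_smult_add: "qm_smult r (qm_add A B) = qm_add (qm_smult r A) (qm_smult r B)"
  by (rule ext)+ (simp add: qm_smult_def qm_add_def distrib_left)

lemma qm_smult_smult: "qm_smult r (qm_smult s A) = qm_smult (r * s) A"
  by (rule ext)+
    (simp add: qm_smult_def mult.assoc[symmetric] qreal_mult_qreal del: quat_mult_components)

lemma qm_add_commute: "qm_add A B = qm_add B A"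
  by (rule ext)+ (simp add: qm_add_def add.commute)

lemma qm_add_assoc: "qm_add (qm_add A B) C = qm_add A (qm_add B C)"
  by (rule ext)+ (simp add: qm_add_def add.assoc)

lemma qm_add_left_commute: "qm_add A (qm_add B C) = qm_add B (qm_add A C)"
  by (rule ext)+ (simp add: qm_add_def add_ac)

lemma outer_mult_outer: "qm_mult (outer x) (outer x) = qm_smult (vnorm2 x) (outer x)"
proof (rule ext)+
  fix a b
  have "(\<Sum>k\<in>UNIV. x$a * qcnj (x$k) * (x$k * qcnj (x$b)))
     = (\<Sum>k\<in>UNIV. x$a * (qcnj (x$k) * x$k) * qcnj (x$b))"
    by (simp add: mult.assoc)
  also have "\<dots> = x$a * qreal (vnorm2 x) * qcnj (x$b)"
    by (simp add: mult_qcnj_self vnorm2_def qreal_sum sum_distrib_left sum_distrib_right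
        del: quat_mult_components)
  also have "\<dots> = qreal (vnorm2 x) * (x$a * qcnj (x$b))"
    by (metis mult.assoc qreal_mult_commute)
  finally show "qm_mult (outer x) (outer x) a b = qm_smult (vnorm2 x) (outer x) a b"
    by (simp add: qm_mult_def outer_def qm_smult_def del: quat_mult_components)
qed

lemma hermitianD: "hermitian A \<Longrightarrow> A b a = qcnj (A a b)"
  unfolding hermitian_def by blast

lemma hmat_inner_self_nonneg: "hermitian Z \<Longrightarrow> hmat_inner Z Z \<ge> 0"
proof -
  assume herm: "hermitian Z"
  have "qRe (Z a b * Z b a) \<ge> 0" for a b
  proof -
    have "Z a b * Z b a = qreal (qnorm2 (Z a b))"
      by (simp only: hermitianD[OF herm, of b a] mult_qcnj_self(1))
    then show ?thesis
      by (simp only: qreal_components qnorm2_nonneg)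
  qed
  then show ?thesis
    unfolding hmat_inner_def qRe_sum by (simp add: sum_nonneg)
qed

lemma hermitian_add: "hermitian A \<Longrightarrow> hermitian B \<Longrightarrow> hermitian (qm_add A B)"
  unfolding hermitian_def qm_add_def by (metis qcnj_add)

lemma hermitian_smult: "hermitian A \<Longrightarrow> hermitian (qm_smult r A)"
  unfolding hermitian_def qm_smult_def by (metis qcnj_mult qreal_mult_commute qcnj_qreal)

lemma hermitian_one: "hermitian qm_one"
  by (simp add: hermitian_def qm_one_def quat_eq_iff)

lemma hermitian_outer: "hermitian (outer x)"
  by (simp add: hermitian_def outer_def qcnj_mult)

lemma hermitian_Gamma_mat: "hermitian (Gamma_mat x)"
  by (simp add: Gamma_mat_eq hermitian_add hermitian_outer hermitian_smult hermitian_one)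

lemma hermitian_sum: "(\<And>i. i \<in> I \<Longrightarrow> hermitian (f i)) \<Longrightarrow> hermitian (qm_sum f I)"
  unfolding hermitian_def qm_sum_def qcnj_sum by (intro allI sum.cong refl) blast

lemma qm_mult_hermitian_swap:
  assumes "hermitian A" "hermitian B"
  shows "qm_mult B A b a = qcnj (qm_mult A B a b)"
proof -
  have "B b k * A k a = qcnj (A a k * B k b)" for k
    using hermitianD[OF assms(1), of k a] hermitianD[OF assms(2), of b k] by (metis qcnj_mult)
  then show ?thesis
    by (simp add: qm_mult_def qcnj_sum del: quat_mult_components)
qed

lemma hermitian_jordan:
  assumes "hermitian M" "hermitian X"
  shows "hermitian (jordan M X)"
proof -
  have "hermitian (qm_add (qm_mult M X) (qm_mult X M))"
    unfolding hermitian_def qm_add_def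
  proof (intro allI)
    fix a b
    show "qm_mult M X b a + qm_mult X M b a = qcnj (qm_mult M X a b + qm_mult X M a b)"
      unfolding qm_mult_hermitian_swap[OF assms, of b a] qm_mult_hermitian_swap[OF assms(2,1), of b a]
      by (simp add: add.commute)
  qed
  then show ?thesis
    unfolding jordan_def by (rule hermitian_smult)
qed

lemma jordan_commute: "jordan M X = jordan X M"
  by (simp add: jordan_def qm_add_commute)

lemma hmat_inner_jordan: "hmat_inner (jordan M X) Y = hmat_inner X (jordan M Y)"
proof -
  have "hmat_inner (qm_mult M X) Y = hmat_inner X (qm_mult Y M)"
    by (metis hmat_inner_mult_left hmat_inner_commute)
  moreover have "hmat_inner (qm_mult X M) Y = hmat_inner X (qm_mult M Y)"
    by (rule hmat_inner_mult_left)
  ultimately show ?thesis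
    by (simp add: jordan_def)
qed

lemma qm_smult_half_add_self: "qm_smult (1/2) (qm_add X X) = X"
  by (rule ext)+ (simp add: qm_smult_def qm_add_def quat_eq_iff)

lemma jordan_one_left [simp]: "jordan qm_one X = X"
  and jordan_one_right [simp]: "jordan X qm_one = X"
  by (simp_all add: jordan_def qm_smult_half_add_self)

lemma hmat_inner_one_jordan: "hmat_inner qm_one (jordan M X) = hmat_inner M X"
  by (metis hmat_inner_jordan jordan_one_right)

lemma hmat_inner_jordan_one: "hmat_inner (jordan M X) qm_one = hmat_inner M X"
  by (metis hmat_inner_one_jordan hmat_inner_commute)

lemma jordan_add_left [simp]: "jordan (qm_add A B) X = qm_add (jordan A X) (jordan B X)"
  and jordan_add_right [simp]: "jordan X (qm_add A B) = qm_add (jordan X A) (jordan X B)"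
  by (simp_all add: jordan_def qm_mult_add_left qm_mult_add_right qm_smult_add qm_add_assoc
      qm_add_left_commute)

lemma jordan_smult_left [simp]: "jordan (qm_smult r A) X = qm_smult r (jordan A X)"
  and jordan_smult_right [simp]: "jordan X (qm_smult r A) = qm_smult r (jordan X A)"
  by (simp_all add: jordan_def qm_mult_smult_left qm_mult_smult_right qm_smult_add qm_smult_smult
      mult.commute)

lemma hmat_inner_outer_jordan:
  "hmat_inner (jordan Q (outer x)) (outer x) = vnorm2 x * hmat_inner (outer x) Q"
proof -
  have "hmat_inner (outer x) (qm_mult Q (outer x)) = vnorm2 x * hmat_inner (outer x) Q"
    by (metis hmat_inner_mult_left hmat_inner_commute outer_mult_outer hmat_inner_smult_left)
  moreover have "hmat_inner (outer x) (qm_mult (outer x) Q) = vnorm2 x * hmat_inner (outer x) Q"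
    by (metis hmat_inner_mult_left outer_mult_outer hmat_inner_smult_left)
  ultimately have "hmat_inner (outer x) (jordan Q (outer x)) = vnorm2 x * hmat_inner (outer x) Q"
    by (simp add: jordan_def)
  then show ?thesis
    by (subst hmat_inner_commute)
qed

definition quat_dot :: "quat \<Rightarrow> quat \<Rightarrow> real" where
  "quat_dot p q = qRe p * qRe q + qIm1 p * qIm1 q + qIm2 p * qIm2 q + qIm3 p * qIm3 q"

definition herm3 :: "real \<Rightarrow> real \<Rightarrow> real \<Rightarrow> quat \<Rightarrow> quat \<Rightarrow> quat \<Rightarrow> qmat" where
  "herm3 d1 d2 d3 p q r = (\<lambda>a b.
      if a = 1 then (if b = 1 then qreal d1 else if b = 2 then p else q)
      else if a = 2 then (if b = 1 then qcnj p else if b = 2 then qreal d2 else r)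
      else (if b = 1 then qcnj q else if b = 2 then qcnj r else qreal d3))"

lemma num3_neq [simp]:
  "(1::3) \<noteq> 2" "(1::3) \<noteq> 3" "(2::3) \<noteq> 3" "(2::3) \<noteq> 1" "(3::3) \<noteq> 1" "(3::3) \<noteq> 2"
  by simp_all

lemma hermitian_herm3: "hermitian (herm3 d1 d2 d3 p q r)"
  unfolding hermitian_def
proof (intro allI)
  fix a b
  show "herm3 d1 d2 d3 p q r b a = qcnj (herm3 d1 d2 d3 p q r a b)"
    using exhaust_3[of a] exhaust_3[of b] by (auto simp: herm3_def)
qed

lemma hermitian_eq_herm3:
  assumes "hermitian A"
  shows "A = herm3 (qRe (A 1 1)) (qRe (A 2 2)) (qRe (A 3 3)) (A 1 2) (A 1 3) (A 2 3)"
proof (rule ext)+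
  fix a b
  have diag: "A k k = qreal (qRe (A k k))" for k
    using hermitianD[OF assms, of k k] by (simp add: quat_eq_iff)
  show "A a b = herm3 (qRe (A 1 1)) (qRe (A 2 2)) (qRe (A 3 3)) (A 1 2) (A 1 3) (A 2 3) a b"
    using exhaust_3[of a] exhaust_3[of b]
    by (auto simp: herm3_def hermitianD[OF assms, of 1 2] hermitianD[OF assms, of 1 3]
        hermitianD[OF assms, of 2 3] intro: diag)
qed

lemma hermitian_obtain_herm3:
  assumes "hermitian A"
  obtains d1 d2 d3 p q r where "A = herm3 d1 d2 d3 p q r"
  using hermitian_eq_herm3[OF assms] by blast

lemma hmat_inner_herm3:
  "hmat_inner (herm3 d1 d2 d3 p q r) (herm3 e1 e2 e3 p' q' r') =
     d1 * e1 + d2 * e2 + d3 * e3 + 2 * (quat_dot p p' + quat_dot q q' + quat_dot r r')"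
  by (simp add: hmat_inner_def sum_3 herm3_def quat_dot_def)

lemma qm_one_eq_herm3: "qm_one = herm3 1 1 1 0 0 0"
proof (rule ext)+
  fix a b
  show "qm_one a b = herm3 1 1 1 0 0 0 a b"
    using exhaust_3[of a] exhaust_3[of b] by (auto simp: qm_one_def herm3_def quat_eq_iff)
qed

lemma jordan_herm3:
  "jordan (herm3 a1 a2 a3 p q r) (herm3 e1 e2 e3 u v w) =
    herm3 (a1*e1 + quat_dot p u + quat_dot q v) (a2*e2 + quat_dot p u + quat_dot r w)
      (a3*e3 + quat_dot q v + quat_dot r w)
      (qreal (1/2) * (qreal (a1+a2) * u + qreal (e1+e2) * p + q * qcnj w + v * qcnj r))
      (qreal (1/2) * (qreal (a1+a3) * v + qreal (e1+e3) * q + p * w + u * r))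
      (qreal (1/2) * (qreal (a2+a3) * w + qreal (e2+e3) * r + qcnj p * v + qcnj u * q))"
    (is "?l = ?r")
proof (rule ext)+
  fix a b
  show "?l a b = ?r a b"
    using exhaust_3[of a] exhaust_3[of b]
    by (auto simp: jordan_def qm_smult_def qm_add_def qm_mult_def sum_3 herm3_def quat_eq_iff
        quat_dot_def algebra_simps)
qed

text \<open>Only the upper triangle is read, so \<open>herm_coords\<close> is faithful on Hermitian matrices only.\<close>

type_synonym real15 = "real \<times> real \<times> real \<times> real \<times> real \<times> real \<times> real \<times> real \<times>
  real \<times> real \<times> real \<times> real \<times> real \<times> real \<times> real"

definition herm_coords :: "qmat \<Rightarrow> real15" where
  "herm_coords A = (qRe (A 1 1), qRe (A 2 2), qRe (A 3 3),
     qRe (A 1 2), qIm1 (A 1 2), qIm2 (A 1 2), qIm3 (A 1 2),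
     qRe (A 1 3), qIm1 (A 1 3), qIm2 (A 1 3), qIm3 (A 1 3),
     qRe (A 2 3), qIm1 (A 2 3), qIm2 (A 2 3), qIm3 (A 2 3))"

lemma herm_coords_add: "herm_coords (qm_add A B) = herm_coords A + herm_coords B"
  by (simp add: herm_coords_def qm_add_def)

lemma herm_coords_smult: "herm_coords (qm_smult r A) = r *\<^sub>R herm_coords A"
  by (simp add: herm_coords_def qm_smult_def)

lemma herm_coords_sum: "finite I \<Longrightarrow> herm_coords (qm_sum f I) = (\<Sum>i\<in>I. herm_coords (f i))"
proof (induction I rule: finite_induct)
  case empty
  show ?case by (simp add: herm_coords_def qm_sum_def zero_prod_def)
next
  case (insert a F)
  then have "qm_sum f (insert a F) = qm_add (f a) (qm_sum f F)"
    by (simp add: qm_sum_def qm_add_def)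
  with insert show ?case
    by (simp add: herm_coords_add)
qed

lemma hmat_inner_herm_coords_zero:
  assumes "hermitian A" "hermitian W" "herm_coords A = 0"
  shows "hmat_inner A W = 0"
proof -
  obtain d1 d2 d3 p q r where A: "A = herm3 d1 d2 d3 p q r"
    using hermitian_obtain_herm3[OF assms(1)] .
  obtain e1 e2 e3 p' q' r' where W: "W = herm3 e1 e2 e3 p' q' r'"
    using hermitian_obtain_herm3[OF assms(2)] .
  have "d1 = 0 \<and> d2 = 0 \<and> d3 = 0 \<and> p = 0 \<and> q = 0 \<and> r = 0"
    using assms(3) unfolding A by (simp add: herm_coords_def herm3_def zero_prod_def quat_eq_iff)
  then show ?thesis
    unfolding A W hmat_inner_herm3 by (simp add: quat_dot_def)
qed

definition qi :: quat where "qi = Quat 0 1 0 0"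
definition qj :: quat where "qj = Quat 0 0 1 0"
definition qk :: quat where "qk = Quat 0 0 0 1"

text \<open>\<open>basis_sum F = \<Sum>\<^sub>E F E\<close> over an orthonormal basis \<open>E\<close> of the Hermitian matrices for
  \<open>hmat_inner\<close>; the off-diagonal basis matrices have norm \<open>\<surd>2\<close>, whence the factor \<open>1/2\<close>.\<close>

definition basis_sum :: "(qmat \<Rightarrow> real) \<Rightarrow> real" where
  "basis_sum F = F (herm3 1 0 0 0 0 0) + F (herm3 0 1 0 0 0 0) + F (herm3 0 0 1 0 0 0)
    + (F (herm3 0 0 0 1 0 0) + F (herm3 0 0 0 qi 0 0) + F (herm3 0 0 0 qj 0 0) + F (herm3 0 0 0 qk 0 0)
    + F (herm3 0 0 0 0 1 0) + F (herm3 0 0 0 0 qi 0) + F (herm3 0 0 0 0 qj 0) + F (herm3 0 0 0 0 qk 0)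
    + F (herm3 0 0 0 0 0 1) + F (herm3 0 0 0 0 0 qi) + F (herm3 0 0 0 0 0 qj) + F (herm3 0 0 0 0 0 qk)) / 2"

lemma basis_sum_add: "basis_sum (\<lambda>E. f E + g E) = basis_sum f + basis_sum g"
  by (simp add: basis_sum_def algebra_simps add_divide_distrib)

lemma basis_sum_cmult: "basis_sum (\<lambda>E. c * f E) = c * basis_sum f"
  by (simp add: basis_sum_def algebra_simps)

lemma basis_sum_sum: "finite I \<Longrightarrow> basis_sum (\<lambda>E. \<Sum>i\<in>I. f i E) = (\<Sum>i\<in>I. basis_sum (f i))"
  by (induction I rule: finite_induct) (simp_all add: basis_sum_add, simp add: basis_sum_def)

lemma basis_sum_nonneg: "(\<And>E. hermitian E \<Longrightarrow> f E \<ge> 0) \<Longrightarrow> basis_sum f \<ge> 0"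
  unfolding basis_sum_def by (intro add_nonneg_nonneg divide_nonneg_nonneg; simp add: hermitian_herm3)

lemma basis_sum_parseval:
  assumes "hermitian A" "hermitian B"
  shows "basis_sum (\<lambda>E. hmat_inner A E * hmat_inner B E) = hmat_inner A B"
proof -
  obtain d1 d2 d3 p q r where A: "A = herm3 d1 d2 d3 p q r"
    using hermitian_obtain_herm3[OF assms(1)] .
  obtain e1 e2 e3 p' q' r' where B: "B = herm3 e1 e2 e3 p' q' r'"
    using hermitian_obtain_herm3[OF assms(2)] .
  show ?thesis
    unfolding A B by (simp add: basis_sum_def hmat_inner_herm3 quat_dot_def qi_def qj_def qk_def
        algebra_simps)
qed

lemma basis_sum_jordan:
  assumes "hermitian M" "hermitian N"
  shows "basis_sum (\<lambda>E. hmat_inner (jordan M E) (jordan N E))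
    = 2 * hmat_inner M N + hmat_inner M qm_one * hmat_inner N qm_one"
proof -
  obtain d1 d2 d3 p q r where M: "M = herm3 d1 d2 d3 p q r"
    using hermitian_obtain_herm3[OF assms(1)] .
  obtain e1 e2 e3 p' q' r' where N: "N = herm3 e1 e2 e3 p' q' r'"
    using hermitian_obtain_herm3[OF assms(2)] .
  show ?thesis
    unfolding M N basis_sum_def jordan_herm3 qm_one_eq_herm3 hmat_inner_herm3
    by (simp add: quat_dot_def qi_def qj_def qk_def algebra_simps)
qed

section \<open>Positivity of the degree-2 zonal kernel\<close>

definition jordan_map :: "qmat \<Rightarrow> qmat \<Rightarrow> qmat \<Rightarrow> qmat \<Rightarrow> qmat \<Rightarrow> qmat" where
  "jordan_map P A B M E =
     qm_add (qm_add (qm_smult (hmat_inner P E) A) (qm_smult (hmat_inner qm_one E) B)) (jordan M E)"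

lemma hermitian_jordan_map:
  "hermitian A \<Longrightarrow> hermitian B \<Longrightarrow> hermitian M \<Longrightarrow> hermitian E \<Longrightarrow> hermitian (jordan_map P A B M E)"
  by (simp add: jordan_map_def hermitian_add hermitian_smult hermitian_jordan)

lemma basis_sum_jordan_map:
  assumes herm: "hermitian P" "hermitian Q" "hermitian A" "hermitian B" "hermitian A'" "hermitian B'"
    "hermitian M" "hermitian M'"
  shows "basis_sum (\<lambda>E. hmat_inner (jordan_map P A B M E) (jordan_map Q A' B' M' E))
   = hmat_inner P Q * hmat_inner A A' + hmat_inner P qm_one * hmat_inner A B'
     + hmat_inner (jordan M' A) P + hmat_inner qm_one Q * hmat_inner B A' + 3 * hmat_inner B B'
     + hmat_inner (jordan M' B) qm_one + hmat_inner (jordan M A') Q + hmat_inner (jordan M B') qm_one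
     + (2 * hmat_inner M M' + hmat_inner M qm_one * hmat_inner M' qm_one)"
proof -
  have move_left: "hmat_inner C (jordan N E) = hmat_inner (jordan N C) E" for C N E
    by (simp add: hmat_inner_jordan)
  have move_right: "hmat_inner (jordan N E) C = hmat_inner (jordan N C) E" for C N E
    by (metis hmat_inner_jordan hmat_inner_commute)
  have expand: "hmat_inner (jordan_map P A B M E) (jordan_map Q A' B' M' E)
   = hmat_inner A A' * (hmat_inner P E * hmat_inner Q E)
     + hmat_inner A B' * (hmat_inner P E * hmat_inner qm_one E)
     + hmat_inner (jordan M' A) E * hmat_inner P E
     + hmat_inner B A' * (hmat_inner qm_one E * hmat_inner Q E)
     + hmat_inner B B' * (hmat_inner qm_one E * hmat_inner qm_one E)
     + hmat_inner (jordan M' B) E * hmat_inner qm_one E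
     + hmat_inner (jordan M A') E * hmat_inner Q E + hmat_inner (jordan M B') E * hmat_inner qm_one E
     + hmat_inner (jordan M E) (jordan M' E)" for E
    by (simp add: jordan_map_def move_left[of A M'] move_left[of B M'] move_right[where C=A' and N=M]
        move_right[where C=B' and N=M] algebra_simps)
  have "hermitian (jordan M' A)" "hermitian (jordan M' B)" "hermitian (jordan M A')"
    "hermitian (jordan M B')"
    using herm by (simp_all add: hermitian_jordan)
  with herm show ?thesis
    unfolding expand basis_sum_add basis_sum_cmult
    by (simp add: basis_sum_parseval hermitian_one basis_sum_jordan hmat_inner_one_one)
qed

text \<open>A map \<open>E \<mapsto> S\<^sub>x(E)\<close>, quadratic in \<open>x\<close>, whose coefficients are tuned so that its Gram kernel
  \<open>\<Sum>\<^sub>E \<langle>S\<^sub>x(E), S\<^sub>y(E)\<rangle>\<close> is the degree-2 zonal polynomial \<open>zonal2\<close> of \<open>\<bbbH>\<bbbP>\<^sup>2\<close>.\<close>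

definition zonal_map :: "quat^3 \<Rightarrow> qmat \<Rightarrow> qmat" where
  "zonal_map x = jordan_map (outer x)
     (qm_add (outer x) (qm_smult (- (vnorm2 x / 4)) qm_one))
     (qm_add (qm_smult (- (vnorm2 x / 4)) (outer x)) (qm_smult ((vnorm2 x)\<^sup>2 / 14) qm_one))
     (qm_add (qm_smult (- (vnorm2 x / 4)) (outer x)) (qm_smult ((vnorm2 x)\<^sup>2 / 28) qm_one))"

definition zonal2 :: "quat^3 \<Rightarrow> quat^3 \<Rightarrow> real" where
  "zonal2 x y = (hmat_inner (outer x) (outer y))\<^sup>2
     - 3/4 * hmat_inner (outer x) (outer y) * vnorm2 x * vnorm2 y + 3/28 * (vnorm2 x)\<^sup>2 * (vnorm2 y)\<^sup>2"

lemma hermitian_zonal_map: "hermitian E \<Longrightarrow> hermitian (zonal_map x E)"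
  by (simp add: zonal_map_def hermitian_jordan_map hermitian_add hermitian_smult hermitian_outer
      hermitian_one)

lemma basis_sum_zonal_map: "basis_sum (\<lambda>E. hmat_inner (zonal_map x E) (zonal_map y E)) = zonal2 x y"
proof -
  have "hmat_inner (outer y) (outer x) = hmat_inner (outer x) (outer y)"
    by (rule hmat_inner_commute)
  moreover have "hmat_inner (jordan (outer z) Q) (outer z) = vnorm2 z * hmat_inner (outer z) Q" for Q z
    by (simp add: jordan_commute hmat_inner_outer_jordan)
  ultimately show ?thesis
    unfolding zonal_map_def zonal2_def
    by (subst basis_sum_jordan_map; simp add: hermitian_add hermitian_smult hermitian_outer hermitian_one
        hmat_inner_outer_jordan hmat_inner_jordan_one hmat_inner_one_jordan hmat_inner_outer_one
        hmat_inner_one_outer hmat_inner_one_one hmat_inner_outer_self field_simps power2_eq_square)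
qed

theorem zonal2_psd:
  assumes "finite I"
  shows "0 \<le> (\<Sum>i\<in>I. \<Sum>j\<in>I. c i * c j * zonal2 (x i) (x j))"
proof -
  define Z where "Z E = qm_sum (\<lambda>i. qm_smult (c i) (zonal_map (x i) E)) I" for E
  have "0 \<le> basis_sum (\<lambda>E. hmat_inner (Z E) (Z E))"
    by (intro basis_sum_nonneg hmat_inner_self_nonneg)
      (auto simp: Z_def intro!: hermitian_sum hermitian_smult hermitian_zonal_map)
  also have "(\<lambda>E. hmat_inner (Z E) (Z E))
      = (\<lambda>E. \<Sum>i\<in>I. \<Sum>j\<in>I. c i * c j * hmat_inner (zonal_map (x i) E) (zonal_map (x j) E))"
    by (rule ext) (simp add: Z_def hmat_inner_sum_left hmat_inner_sum_right assms sum_distrib_left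
        mult.assoc, subst sum.swap, simp add: mult.left_commute)
  also have "basis_sum \<dots> = (\<Sum>i\<in>I. \<Sum>j\<in>I. c i * c j * zonal2 (x i) (x j))"
    by (simp add: basis_sum_sum assms basis_sum_cmult basis_sum_zonal_map)
  finally show ?thesis .
qed

section \<open>The rank bound\<close>

lemma hmat_inner_eq_of_herm_coords_eq:
  assumes "hermitian A" "hermitian B" "hermitian W" "herm_coords A = herm_coords B"
  shows "hmat_inner A W = hmat_inner B W"
proof -
  have "hmat_inner (qm_add A (qm_smult (-1) B)) W = 0"
    using assms by (intro hmat_inner_herm_coords_zero hermitian_add hermitian_smult)
      (simp_all add: herm_coords_add herm_coords_smult)
  then show ?thesis
    by simp
qed

lemma inj_on_herm_coords_Gamma:
  fixes x :: "'i \<Rightarrow> quat^3"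
  assumes neg: "\<And>i j. i \<in> I \<Longrightarrow> j \<in> I \<Longrightarrow> i \<noteq> j \<Longrightarrow> hmat_inner (Gamma_mat (x i)) (Gamma_mat (x j)) < 0"
  shows "inj_on (\<lambda>i. herm_coords (Gamma_mat (x i))) I"
proof (rule inj_onI, rule ccontr)
  fix i j
  assume "i \<in> I" "j \<in> I" "herm_coords (Gamma_mat (x i)) = herm_coords (Gamma_mat (x j))" "i \<noteq> j"
  then have "hmat_inner (Gamma_mat (x i)) (Gamma_mat (x i)) = hmat_inner (Gamma_mat (x j)) (Gamma_mat (x i))"
    by (intro hmat_inner_eq_of_herm_coords_eq hermitian_Gamma_mat)
  moreover have "hmat_inner (Gamma_mat (x i)) (Gamma_mat (x i)) \<ge> 0"
    by (simp add: hmat_inner_Gamma_self)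
  moreover have "hmat_inner (Gamma_mat (x j)) (Gamma_mat (x i)) < 0"
    using neg \<open>i \<in> I\<close> \<open>j \<in> I\<close> \<open>i \<noteq> j\<close> by auto
  ultimately show False
    by linarith
qed

lemma herm_coords_Gamma_neq_one: "herm_coords (Gamma_mat x) \<noteq> herm_coords qm_one"
proof
  assume "herm_coords (Gamma_mat x) = herm_coords qm_one"
  then have "hmat_inner (Gamma_mat x) qm_one = hmat_inner qm_one qm_one"
    by (intro hmat_inner_eq_of_herm_coords_eq hermitian_Gamma_mat hermitian_one)
  then show False
    by (simp add: hmat_inner_Gamma_one hmat_inner_one_one)
qed

text \<open>At most 15 of the \<open>herm_coords\<close> of \<open>\<Gamma>\<^sub>i\<close> and \<open>I\<^sub>3\<close> are linearly independent. Since the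
  \<open>\<Gamma>\<^sub>i\<close> are traceless the identity drops out of any relation; negative off-diagonal Gram entries
  keep the \<open>\<Gamma>\<^sub>i\<close> distinct.\<close>

lemma Gamma_gram_singular:
  fixes x :: "'i \<Rightarrow> quat^3"
  assumes "finite I" "card I \<ge> 15"
    and neg: "\<And>i j. i \<in> I \<Longrightarrow> j \<in> I \<Longrightarrow> i \<noteq> j \<Longrightarrow> hmat_inner (Gamma_mat (x i)) (Gamma_mat (x j)) < 0"
  obtains a where "\<exists>i\<in>I. a i \<noteq> 0"
    and "\<And>k. k \<in> I \<Longrightarrow> (\<Sum>i\<in>I. a i * hmat_inner (Gamma_mat (x i)) (Gamma_mat (x k))) = 0"
proof -
  define V where "V i = herm_coords (Gamma_mat (x i))" for i
  define e where "e = herm_coords qm_one"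
  have herm: "hermitian (Gamma_mat (x i))" for i
    by (rule hermitian_Gamma_mat)
  have inj: "inj_on V I"
    unfolding V_def using neg by (rule inj_on_herm_coords_Gamma)
  have "e \<notin> V ` I"
    using herm_coords_Gamma_neq_one[THEN not_sym] by (auto simp: V_def e_def)
  define S where "S = insert e (V ` I)"
  have "finite S" "card S > DIM(real15)"
    using \<open>e \<notin> V ` I\<close> inj assms(1,2) by (simp_all add: S_def card_image)
  then have "dependent S"
    using dependent_biggerset by blast
  then obtain u where u_nonzero: "\<exists>v\<in>S. u v \<noteq> 0" and u_rel: "(\<Sum>v\<in>S. u v *\<^sub>R v) = 0"
    using real_vector.dependent_finite[OF \<open>finite S\<close>] by blast
  define Z where "Z = qm_add (qm_sum (\<lambda>i. qm_smult (u (V i)) (Gamma_mat (x i))) I) (qm_smult (u e) qm_one)"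
  have "(\<Sum>v\<in>S. u v *\<^sub>R v) = u e *\<^sub>R e + (\<Sum>i\<in>I. u (V i) *\<^sub>R V i)"
    using \<open>e \<notin> V ` I\<close> inj assms(1) by (simp add: S_def sum.reindex)
  moreover have "herm_coords Z = u e *\<^sub>R e + (\<Sum>i\<in>I. u (V i) *\<^sub>R V i)"
    unfolding Z_def herm_coords_add herm_coords_smult herm_coords_sum[OF assms(1)]
    by (simp add: V_def e_def add.commute)
  ultimately have "herm_coords Z = herm_coords (qm_smult 0 qm_one)"
    using u_rel by (simp add: herm_coords_smult)
  then have Z_orth: "hmat_inner Z W = 0" if "hermitian W" for W
    using hmat_inner_eq_of_herm_coords_eq[of Z "qm_smult 0 qm_one" W] that
    by (simp add: Z_def hermitian_add hermitian_sum hermitian_smult herm hermitian_one)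
  have "hmat_inner Z qm_one = 3 * u e"
    by (simp add: Z_def hmat_inner_sum_left assms(1) hmat_inner_Gamma_one hmat_inner_one_one)
  then have "u e = 0"
    using Z_orth[OF hermitian_one] by simp
  show thesis
  proof
    show "\<exists>i\<in>I. u (V i) \<noteq> 0"
      using u_nonzero \<open>u e = 0\<close> by (auto simp: S_def)
    show "(\<Sum>i\<in>I. u (V i) * hmat_inner (Gamma_mat (x i)) (Gamma_mat (x k))) = 0" if "k \<in> I" for k
      using Z_orth[OF herm, of k] \<open>u e = 0\<close> by (simp add: Z_def hmat_inner_sum_left assms(1))
  qed
qed

lemma singular_diag_minus_const:
  fixes a d :: "'i \<Rightarrow> real"
  assumes "finite I" and d_pos: "\<And>k. k \<in> I \<Longrightarrow> d k > 0" and "\<exists>i\<in>I. a i \<noteq> 0"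
    and rel: "\<And>k. k \<in> I \<Longrightarrow> (\<Sum>i\<in>I. a i * ((if i = k then d k else 0) - e)) = 0"
  shows "e * (\<Sum>k\<in>I. 1 / d k) = 1"
proof -
  define s where "s = (\<Sum>i\<in>I. a i)"
  have a_eq: "a k = e * s / d k" if "k \<in> I" for k
  proof -
    have "(\<Sum>i\<in>I. a i * ((if i = k then d k else 0) - e))
        = (\<Sum>i\<in>I. (if i = k then a i * d k else 0) - e * a i)"
      by (rule sum.cong) (auto simp: algebra_simps)
    also have "\<dots> = a k * d k - e * s"
      using that assms(1) by (simp add: sum_subtractf s_def sum_distrib_left)
    finally show ?thesis
      using rel[OF that] d_pos[OF that] by (simp add: field_simps)
  qed
  have "s \<noteq> 0"
    using assms(3) a_eq by auto
  have "s = (\<Sum>k\<in>I. a k)"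
    by (rule s_def)
  also have "\<dots> = (\<Sum>k\<in>I. e * s / d k)"
    by (rule sum.cong[OF refl]) (rule a_eq)
  also have "\<dots> = s * (e * (\<Sum>k\<in>I. 1 / d k))"
    by (simp add: sum_distrib_left mult.commute)
  finally show ?thesis
    using \<open>s \<noteq> 0\<close> by simp
qed

definition zonal_weight :: "real \<Rightarrow> real" where
  "zonal_weight t = 21 / (14 * t\<^sup>2 + 1)"

lemma zonal_weight_pos: "zonal_weight t > 0"
  by (simp add: zonal_weight_def add_nonneg_pos)

lemma Gamma_zonal_weight_sum:
  fixes x :: "'i \<Rightarrow> quat^3"
  assumes "finite I" "card I \<ge> 15"
    and gram: "\<And>i j. i \<in> I \<Longrightarrow> j \<in> I \<Longrightarrow> i \<noteq> j \<Longrightarrow> hmat_inner (Gamma_mat (x i)) (Gamma_mat (x j)) = - 1 / 21"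
  shows "(\<Sum>i\<in>I. zonal_weight (vnorm2 (x i))) = 21"
proof -
  define d where "d k = 2/3 * (vnorm2 (x k))\<^sup>2 + 1/21" for k
  have d_pos: "d k > 0" for k
    by (simp add: d_def add_nonneg_pos)
  have entries: "hmat_inner (Gamma_mat (x i)) (Gamma_mat (x k)) = (if i = k then d k else 0) - 1/21"
    if "i \<in> I" "k \<in> I" for i k
    using gram[OF that] by (simp add: d_def hmat_inner_Gamma_self)
  have neg: "hmat_inner (Gamma_mat (x i)) (Gamma_mat (x j)) < 0" if "i \<in> I" "j \<in> I" "i \<noteq> j" for i j
    using gram[OF that] by simp
  obtain a where "\<exists>i\<in>I. a i \<noteq> 0"
    and rel: "\<And>k. k \<in> I \<Longrightarrow> (\<Sum>i\<in>I. a i * hmat_inner (Gamma_mat (x i)) (Gamma_mat (x k))) = 0"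
    using Gamma_gram_singular[where x = x, OF assms(1,2) neg] by blast
  have "(\<Sum>i\<in>I. a i * ((if i = k then d k else 0) - 1/21)) = 0" if "k \<in> I" for k
    using rel[OF that] by (simp add: entries that cong: sum.cong_simp)
  then have "1/21 * (\<Sum>k\<in>I. 1 / d k) = 1"
    using singular_diag_minus_const[of I d a "1/21"] assms(1) d_pos \<open>\<exists>i\<in>I. a i \<noteq> 0\<close> by blast
  moreover have "1 / d k = zonal_weight (vnorm2 (x k))" for k
    by (simp add: d_def zonal_weight_def field_simps)
  ultimately show ?thesis
    by simp
qed

section \<open>Comparing the two bounds\<close>

definition zonal2_offdiag :: "real \<Rightarrow> real" where
  "zonal2_offdiag p = -(2/63) * p\<^sup>2 + p / 252 + 1/441"

lemma zonal2_eq_offdiag: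
  assumes "hmat_inner (Gamma_mat x) (Gamma_mat y) = - 1 / 21"
  shows "zonal2 x y = zonal2_offdiag (vnorm2 x * vnorm2 y)"
proof -
  have outer: "hmat_inner (outer x) (outer y) = vnorm2 x * vnorm2 y / 3 - 1/21"
    using assms by (simp add: hmat_inner_Gamma hmat_inner_outer)
  show ?thesis
    unfolding zonal2_def outer zonal2_offdiag_def by (simp add: power2_eq_square algebra_simps)
qed

lemma zonal2_self: "zonal2 x x = 5/14 * (vnorm2 x)^4"
  by (simp add: zonal2_def hmat_inner_outer_self power2_eq_square algebra_simps eval_nat_numeral)

lemma sum_sum_eq_off_diagonal:
  fixes f g :: "'i \<Rightarrow> 'i \<Rightarrow> 'a::ab_group_add"
  assumes "finite I" and off: "\<And>i j. i \<in> I \<Longrightarrow> j \<in> I \<Longrightarrow> i \<noteq> j \<Longrightarrow> f i j = g i j"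
  shows "(\<Sum>i\<in>I. \<Sum>j\<in>I. f i j) = (\<Sum>i\<in>I. \<Sum>j\<in>I. g i j) + (\<Sum>i\<in>I. f i i - g i i)"
proof -
  have "(\<Sum>j\<in>I. f i j) = (\<Sum>j\<in>I. g i j) + (f i i - g i i)" if "i \<in> I" for i
  proof -
    have "(\<Sum>j\<in>I. f i j) = (\<Sum>j\<in>I. g i j + (if j = i then f i i - g i i else 0))"
      using off[OF that] by (intro sum.cong) auto
    then show ?thesis
      using that assms(1) by (simp add: sum.distrib)
  qed
  then show ?thesis
    by (simp add: sum.distrib cong: sum.cong_simp)
qed

lemma sum_sum_zonal2_offdiag:
  fixes c n :: "'i \<Rightarrow> real"
  shows "(\<Sum>i\<in>I. \<Sum>j\<in>I. c i * c j * zonal2_offdiag (n i * n j)) =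
    -(2/63) * (\<Sum>i\<in>I. c i * (n i)\<^sup>2)\<^sup>2 + (\<Sum>i\<in>I. c i * n i)\<^sup>2 / 252 + (\<Sum>i\<in>I. c i)\<^sup>2 / 441"
proof -
  have "(\<Sum>i\<in>I. \<Sum>j\<in>I. c i * c j * zonal2_offdiag (n i * n j)) =
     (\<Sum>i\<in>I. \<Sum>j\<in>I. (-(2/63)) * ((c i * (n i)\<^sup>2) * (c j * (n j)\<^sup>2))
        + (1/252) * ((c i * n i) * (c j * n j)) + (1/441) * (c i * c j))"
    by (intro sum.cong refl) (simp add: zonal2_offdiag_def power2_eq_square algebra_simps)
  also have "\<dots> = (-(2/63)) * (\<Sum>i\<in>I. \<Sum>j\<in>I. (c i * (n i)\<^sup>2) * (c j * (n j)\<^sup>2))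
       + (1/252) * (\<Sum>i\<in>I. \<Sum>j\<in>I. (c i * n i) * (c j * n j)) + (1/441) * (\<Sum>i\<in>I. \<Sum>j\<in>I. c i * c j)"
    by (simp only: sum.distrib flip: sum_distrib_left)
  also have "\<dots> = -(2/63) * (\<Sum>i\<in>I. c i * (n i)\<^sup>2)\<^sup>2 + (\<Sum>i\<in>I. c i * n i)\<^sup>2 / 252
       + (\<Sum>i\<in>I. c i)\<^sup>2 / 441"
    by (simp add: power2_eq_square sum_product)
  finally show ?thesis .
qed

lemma zonal_weight_mult_square: "zonal_weight t * t\<^sup>2 = (21 - zonal_weight t) / 14"
  using zonal_weight_pos[of t] by (simp add: zonal_weight_def field_simps)

lemma zonal_weight_quadratic_form:
  fixes n :: "'i \<Rightarrow> real"
  assumes "finite I" "card I = 15" and weights: "(\<Sum>i\<in>I. zonal_weight (n i)) = 21"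
  defines "w i \<equiv> zonal_weight (n i)"
  shows "(\<Sum>i\<in>I. \<Sum>j\<in>I. w i * w j * zonal2_offdiag (n i * n j))
      + (\<Sum>i\<in>I. w i * w i * (5/14 * (n i)^4 - zonal2_offdiag (n i * n i)))
    = ((\<Sum>i\<in>I. w i * n i)\<^sup>2 - 441) / 252"
proof -
  have "(\<Sum>i\<in>I. w i * (n i)\<^sup>2) = (\<Sum>i\<in>I. 21 - w i) / 14"
    by (simp add: w_def zonal_weight_mult_square sum_divide_distrib)
  then have square_sum: "(\<Sum>i\<in>I. w i * (n i)\<^sup>2) = 21"
    using assms(2) weights by (simp add: sum_subtractf w_def)
  have "w i * w i * (5/14 * (n i)^4 - zonal2_offdiag (n i * n i))
      = (w i * (n i)\<^sup>2)\<^sup>2 * (5/14 + 2/63) - (w i * (n i)\<^sup>2) * w i / 252 - w i * w i / 441" for i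
    by (simp add: zonal2_offdiag_def power2_eq_square algebra_simps eval_nat_numeral)
  also have "\<dots> i = 7/8 - 5/56 * w i" for i
    unfolding w_def zonal_weight_mult_square by (simp add: power2_eq_square field_simps)
  finally have "(\<Sum>i\<in>I. w i * w i * (5/14 * (n i)^4 - zonal2_offdiag (n i * n i)))
      = (\<Sum>i\<in>I. 7/8) - 5/56 * (\<Sum>i\<in>I. w i)"
    by (simp only: sum_subtractf sum_distrib_left)
  also have "\<dots> = 45/4"
    using assms(2) weights by (simp add: w_def)
  finally have diagonal: "(\<Sum>i\<in>I. w i * w i * (5/14 * (n i)^4 - zonal2_offdiag (n i * n i))) = 45/4" .
  moreover have "(\<Sum>i\<in>I. w i) = 21"
    using weights by (simp add: w_def)
  ultimately show ?thesis
    by (simp only: sum_sum_zonal2_offdiag square_sum diagonal) simp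
qed

lemma zonal_weight_excess:
  "zonal_weight t * t - zonal_weight t + 15/28 * (zonal_weight t - 7/5)
    = - (21/2 * (t - 1)\<^sup>2 / (14 * t\<^sup>2 + 1))"
proof -
  define D where "D = 14 * t\<^sup>2 + 1"
  have "D > 0"
    by (simp add: D_def add_nonneg_pos)
  have weight_D: "zonal_weight t * D = 21"
    using \<open>D > 0\<close> by (simp add: zonal_weight_def flip: D_def)
  have "(zonal_weight t * t - zonal_weight t + 15/28 * (zonal_weight t - 7/5)) * D
      = (t - 13/28) * (zonal_weight t * D) - 3/4 * D"
    by (simp add: field_simps)
  also have "\<dots> = - (21/2 * (t - 1)\<^sup>2)"
    unfolding weight_D by (simp add: D_def power2_eq_square algebra_simps)
  finally have "zonal_weight t * t - zonal_weight t + 15/28 * (zonal_weight t - 7/5)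
      = - (21/2 * (t - 1)\<^sup>2) / D"
    using nonzero_eq_divide_eq[of D] \<open>D > 0\<close> by (metis less_irrefl)
  then show ?thesis
    by (simp only: D_def minus_divide_left)
qed

lemma zonal_weight_bound_imp_one:
  fixes n :: "'i \<Rightarrow> real"
  assumes "finite I" "card I = 15" and weights: "(\<Sum>i\<in>I. zonal_weight (n i)) = 21"
    and bound: "21 \<le> (\<Sum>i\<in>I. zonal_weight (n i) * n i)"
  shows "\<forall>i\<in>I. n i = 1"
proof -
  define \<psi> where "\<psi> i = 21/2 * (n i - 1)\<^sup>2 / (14 * (n i)\<^sup>2 + 1)" for i
  have \<psi>_nonneg: "\<psi> i \<ge> 0" for i
    by (simp add: \<psi>_def add_nonneg_pos)
  txt \<open>Since \<open>\<Sum>\<^sub>i (w\<^sub>i - 7/5) = 0\<close>, adding \<open>15/28 (w\<^sub>i - 7/5)\<close> to each summand of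
    \<open>\<Sum>\<^sub>i (w\<^sub>i n\<^sub>i - w\<^sub>i)\<close> turns it into minus a sum of squares.\<close>
  have "(\<Sum>i\<in>I. 15/28 * (zonal_weight (n i) - 7/5)) = 15/28 * ((\<Sum>i\<in>I. zonal_weight (n i)) - (\<Sum>i\<in>I. 7/5))"
    by (simp only: sum_distrib_left[symmetric] sum_subtractf)
  then have balance: "(\<Sum>i\<in>I. 15/28 * (zonal_weight (n i) - 7/5)) = 0"
    using assms(2) weights by simp
  have "(\<Sum>i\<in>I. zonal_weight (n i) * n i) - 21
      = (\<Sum>i\<in>I. zonal_weight (n i) * n i - zonal_weight (n i) + 15/28 * (zonal_weight (n i) - 7/5))"
    by (simp only: sum.distrib sum_subtractf balance weights)
  also have "\<dots> = - (\<Sum>i\<in>I. \<psi> i)"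
    by (simp only: zonal_weight_excess \<psi>_def sum_negf)
  finally have "(\<Sum>i\<in>I. \<psi> i) = 0"
    using bound sum_nonneg[of I \<psi>] \<psi>_nonneg by fastforce
  then have "\<psi> i = 0" if "i \<in> I" for i
    using sum_nonneg_eq_0_iff[OF assms(1)] \<psi>_nonneg that by blast
  moreover have "28 * (n i)\<^sup>2 + 2 \<noteq> 0" for i
    by (smt (verit) zero_le_power2)
  ultimately show ?thesis
    by (simp add: \<psi>_def)
qed

lemma Gamma_zonal_weight_bound:
  fixes x :: "'i \<Rightarrow> quat^3"
  assumes "finite I" "card I = 15"
    and gram: "\<And>i j. i \<in> I \<Longrightarrow> j \<in> I \<Longrightarrow> i \<noteq> j \<Longrightarrow> hmat_inner (Gamma_mat (x i)) (Gamma_mat (x j)) = - 1 / 21"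
  shows "21 \<le> (\<Sum>i\<in>I. zonal_weight (vnorm2 (x i)) * vnorm2 (x i))"
proof -
  define n where "n i = vnorm2 (x i)" for i
  define w where "w i = zonal_weight (n i)" for i
  have weights: "(\<Sum>i\<in>I. zonal_weight (n i)) = 21"
    using Gamma_zonal_weight_sum[OF assms(1)] assms(2) gram by (simp add: n_def)
  have "0 \<le> (\<Sum>i\<in>I. \<Sum>j\<in>I. w i * w j * zonal2 (x i) (x j))"
    by (rule zonal2_psd[OF assms(1)])
  also have "\<dots> = (\<Sum>i\<in>I. \<Sum>j\<in>I. w i * w j * zonal2_offdiag (n i * n j))
      + (\<Sum>i\<in>I. w i * w i * (5/14 * (n i)^4 - zonal2_offdiag (n i * n i)))"
    using assms(1) by (subst sum_sum_eq_off_diagonal)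
      (simp_all add: gram zonal2_eq_offdiag zonal2_self n_def right_diff_distrib)
  also have "\<dots> = ((\<Sum>i\<in>I. w i * n i)\<^sup>2 - 441) / 252"
    unfolding w_def by (rule zonal_weight_quadratic_form[OF assms(1,2) weights])
  finally have "21\<^sup>2 \<le> (\<Sum>i\<in>I. w i * n i)\<^sup>2"
    by simp
  moreover have "0 \<le> (\<Sum>i\<in>I. w i * n i)"
    by (intro sum_nonneg mult_nonneg_nonneg)
      (simp_all add: w_def n_def vnorm2_nonneg less_imp_le zonal_weight_pos)
  ultimately have "21 \<le> (\<Sum>i\<in>I. w i * n i)"
    by (rule power2_le_imp_le)
  then show ?thesis
    by (simp add: n_def w_def)
qed

theorem Gamma_vnorm2_eq_one:
  fixes x :: "'i \<Rightarrow> quat^3"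
  assumes "finite I" "card I = 15"
    and gram: "\<And>i j. i \<in> I \<Longrightarrow> j \<in> I \<Longrightarrow> i \<noteq> j \<Longrightarrow> hmat_inner (Gamma_mat (x i)) (Gamma_mat (x j)) = - 1 / 21"
  shows "\<forall>i\<in>I. vnorm2 (x i) = 1"
  using Gamma_zonal_weight_sum[OF assms(1)] Gamma_zonal_weight_bound[OF assms]
  by (intro zonal_weight_bound_imp_one[OF assms(1,2)]) (simp_all add: assms(2) gram)

lemma qnorm2_hinner_eq_one_of_hline_eq:
  assumes "vnorm2 x = 1" "vnorm2 y = 1" "hline x = hline y"
  shows "qnorm2 (hinner y x) = 1"
proof -
  have "x \<in> hline x"
    unfolding hline_def by (rule CollectI, rule exI[of _ 1]) (simp add: vec_eq_iff)
  then obtain q where q: "x = (\<chi> k. y $ k * q)"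
    using assms(3) unfolding hline_def by blast
  have "hinner y x = (\<Sum>k\<in>UNIV. (qcnj (y $ k) * y $ k) * q)"
    unfolding hinner_def by (subst q) (simp add: mult.assoc)
  also have "\<dots> = qreal (vnorm2 y) * q"
    by (simp add: mult_qcnj_self vnorm2_def qreal_sum sum_distrib_right del: quat_mult_components)
  also have "\<dots> = q"
    using assms(2) by (simp add: qreal_def one_quat_def[symmetric])
  finally have "hinner y x = q" .
  have "vnorm2 x = (\<Sum>k\<in>UNIV. qnorm2 (y $ k) * qnorm2 q)"
    unfolding vnorm2_def by (subst q) (simp add: qnorm2_mult)
  also have "\<dots> = qnorm2 q"
    using assms(2) by (simp add: vnorm2_def sum_distrib_right[symmetric])
  finally show ?thesis
    using assms(1) \<open>hinner y x = q\<close> by simp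
qed

theorem proposition4p11:
  fixes x :: "nat \<Rightarrow> quat^3"
  assumes gram: "\<And>i j. i < 15 \<Longrightarrow> j < 15 \<Longrightarrow> i \<noteq> j \<Longrightarrow>
                   hmat_inner (Gamma_mat (x i)) (Gamma_mat (x j)) = - 1 / 21"
    and norm4: "\<And>i. i < 15 \<Longrightarrow> (vnorm (x i)) ^ 4 \<in> {1 - 10 powi (-6) .. 1 + 10 powi (-6)}"
  shows "(\<forall>i<15. vnorm (x i) = 1) \<and> tight_simplex_HP2 15 x"
proof -
  have unit: "vnorm2 (x i) = 1" if "i < 15" for i
    using Gamma_vnorm2_eq_one[of "{..<15}" x] gram that by simp
  have angle: "qnorm2 (hinner (x i) (x j)) = 2/7" if "i < 15" "j < 15" "i \<noteq> j" for i j
    using gram[OF that] hmat_inner_Gamma[of "x i" "x j"] unit that by simp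
  have "hline (x i) \<noteq> hline (x j)" if "i < 15" "j < 15" "i \<noteq> j" for i j
    using qnorm2_hinner_eq_one_of_hline_eq[of "x i" "x j"] angle[of j i] unit that by auto
  with unit angle show ?thesis
    unfolding tight_simplex_HP2_def vnorm_def by simp
qed

end
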